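(* Assume (F1) and (H1). Every solution $(c,\varphi)$ of the travelling wave problem satisfying $\varphi'(\xi)\geq0$ for all $\xi\in\mathbb{R}$ satisfies $\varphi'(\xi)>0$ for all $\xi\in\mathbb{R}$.
   Context: Fix constants $d>0$, $\tau\geq0$, $K>0$, $f:[0,K]^2\to\mathbb{R}$ and $h:\mathbb{R}\to\mathbb{R}$ (partial derivatives of $f$ assumed to exist). (F1) $f\in C([0,K]^2,\mathbb{R})$, $f(0,0)=f(K,K)=0$, $f(u,u)>0$ for $u\in(0,K)$, $\partial_2f(u,v)\geq0$ on $[0,K]^2$. (H1) $h\ge0$, even, integrable, $\int_{\mathbb{R}}h=1$. Notation: $\Delta_1\varphi(\xi)=\varphi(\xi+1)-2\varphi(\xi)+\varphi(\xi-1)$, $(h*\varphi)(\xi)=\int_{\mathbb{R}}h(y)\varphi(\xi-y)dy$. A solution $(c,\varphi)$ of the travelling wave problem consists of $c>0$ and a differentiable $\varphi:\mathbb{R}\to\mathbb{R}$ with $-c\varphi'(\xi)+d\Delta_1\varphi(\xi)+f(\varphi(\xi),(h*\varphi)(\xi-c\tau))=0$ for all $\xi$, $\lim_{\xi\to-\infty}\varphi(\xi)=0$, $\lim_{\xi\to\infty}\varphi(\xi)=K$, and $0\le\varphi\le K$ on $\mathbb{R}$. *)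

theory Defs
  imports "HOL-Analysis.Analysis"
begin

definition Delta1 :: "(real \<Rightarrow> real) \<Rightarrow> real \<Rightarrow> real" where
  "Delta1 \<phi> \<xi> = \<phi> (\<xi> + 1) - 2 * \<phi> \<xi> + \<phi> (\<xi> - 1)"

definition conv :: "(real \<Rightarrow> real) \<Rightarrow> (real \<Rightarrow> real) \<Rightarrow> real \<Rightarrow> real" where
  "conv h \<phi> \<xi> = (LINT y|lborel. h y * \<phi> (\<xi> - y))"

definition tw_solution ::
  "real \<Rightarrow> real \<Rightarrow> real \<Rightarrow> (real \<Rightarrow> real \<Rightarrow> real) \<Rightarrow> (real \<Rightarrow> real)
    \<Rightarrow> real \<Rightarrow> (real \<Rightarrow> real) \<Rightarrow> bool" where
  "tw_solution d \<tau> K f h c \<phi> \<longleftrightarrow>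
     c > 0 \<and>
     (\<forall>\<xi>. \<phi> differentiable (at \<xi>)) \<and>
     (\<forall>\<xi>. - c * deriv \<phi> \<xi> + d * Delta1 \<phi> \<xi> + f (\<phi> \<xi>) (conv h \<phi> (\<xi> - c * \<tau>)) = 0) \<and>
     (\<phi> \<longlongrightarrow> 0) at_bot \<and>
     (\<phi> \<longlongrightarrow> K) at_top \<and>
     (\<forall>\<xi>. 0 \<le> \<phi> \<xi> \<and> \<phi> \<xi> \<le> K)"

end

theory Submission
  imports Defs
begin

text \<open>If \<open>\<phi>'(\<xi>\<^sub>0) = 0\<close>, then just left of \<open>\<xi>\<^sub>0\<close> the monotonicity of \<open>\<phi>\<close> and of the
  convolution term, together with a Lipschitz bound for \<open>f\<close> in its first argument, give
  \<open>c \<phi>' \<le> M (\<phi>(\<xi>\<^sub>0) - \<phi>)\<close>, and a Gronwall argument makes \<open>\<phi>\<close> constant there. As \<open>\<phi>'\<close>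
  vanishes again at the left end of such a plateau, \<open>\<phi>\<close> is constant, hence zero, on
  \<open>(-\<infinity>, \<xi>\<^sub>0]\<close>. Where \<open>\<phi>\<close> vanishes near \<open>\<xi>\<close>, the equation reads
  \<open>d \<phi>(\<xi> + 1) = - f(0, h * \<phi>) \<le> 0\<close>, so the zero set spreads to the right in steps of length 1,
  contradicting \<open>\<phi> \<rightarrow> K > 0\<close>.\<close>

lemma nondecreasing_if_has_real_derivative_within_Icc:
  fixes g g' :: "real \<Rightarrow> real"
  assumes deriv: "\<And>x. x \<in> {lo..hi} \<Longrightarrow> (g has_real_derivative g' x) (at x within {lo..hi})"
    and nonneg: "\<And>x. x \<in> {lo..hi} \<Longrightarrow> g' x \<ge> 0"
    and "lo \<le> a" "a \<le> b" "b \<le> hi"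
  shows "g a \<le> g b"
proof (rule DERIV_nonneg_imp_increasing_open[of a b g])
  show "a \<le> b" by fact
  have "continuous_on {lo..hi} g"
    unfolding continuous_on_eq_continuous_within using deriv DERIV_continuous by blast
  then show "continuous_on {a..b} g"
    by (rule continuous_on_subset) (use assms in auto)
  fix x assume "a < x" "x < b"
  then have x: "x \<in> {lo..hi}" and "at x within {lo..hi} = at x"
    using assms by (auto intro!: at_within_Icc_at)
  then show "\<exists>y. (g has_real_derivative y) (at x) \<and> 0 \<le> y"
    using deriv[OF x] nonneg[OF x] by auto
qed

lemma local_Lipschitz_if_differentiable_within:
  fixes g :: "real \<Rightarrow> real"
  assumes "g differentiable (at u within S)"
  obtains L r where "r > 0" "\<And>x. x \<in> S \<Longrightarrow> \<bar>x - u\<bar> < r \<Longrightarrow> \<bar>g x - g u\<bar> \<le> L * \<bar>x - u\<bar>"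
proof -
  obtain D where "(g has_derivative (\<lambda>x. x * D)) (at u within S)"
    using assms by (auto simp: real_differentiable_def has_field_derivative_def mult.commute)
  then obtain r where r: "r > 0"
    and approx: "\<And>x. x \<in> S \<Longrightarrow> \<bar>x - u\<bar> < r \<Longrightarrow> \<bar>g x - g u - (x - u) * D\<bar> \<le> \<bar>x - u\<bar>"
    unfolding has_derivative_within_alt by (metis real_norm_def zero_less_one mult_1)
  have "\<bar>g x - g u\<bar> \<le> (\<bar>D\<bar> + 1) * \<bar>x - u\<bar>" if "x \<in> S" "\<bar>x - u\<bar> < r" for x
  proof -
    have "g x - g u = (g x - g u - (x - u) * D) + (x - u) * D" by simp
    then have "\<bar>g x - g u\<bar> \<le> \<bar>g x - g u - (x - u) * D\<bar> + \<bar>x - u\<bar> * \<bar>D\<bar>"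
      by (metis abs_mult abs_triangle_ineq)
    moreover have "(\<bar>D\<bar> + 1) * \<bar>x - u\<bar> = \<bar>x - u\<bar> * \<bar>D\<bar> + \<bar>x - u\<bar>"
      by (simp add: algebra_simps)
    ultimately show ?thesis using approx[OF that] by linarith
  qed
  with r that show ?thesis by blast
qed

lemma backward_Gronwall_eq:
  fixes g g' :: "real \<Rightarrow> real"
  assumes "a \<le> b"
    and deriv: "\<And>t. t \<in> {a..b} \<Longrightarrow> (g has_real_derivative g' t) (at t)"
    and growth: "\<And>t. t \<in> {a..b} \<Longrightarrow> g' t \<le> L * (g b - g t)"
    and below: "g a \<le> g b"
  shows "g a = g b"
proof -
  define G where "G t = exp (L * t) * (g b - g t)" for t
  have "G a \<le> G b"
  proof (rule DERIV_nonneg_imp_nondecreasing[OF \<open>a \<le> b\<close>])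
    fix t assume "a \<le> t" "t \<le> b"
    then have "(G has_real_derivative exp (L * t) * (L * (g b - g t) - g' t)) (at t)"
      unfolding G_def by (auto intro!: derivative_eq_intros deriv simp: algebra_simps)
    moreover have "0 \<le> exp (L * t) * (L * (g b - g t) - g' t)"
      using growth \<open>a \<le> t\<close> \<open>t \<le> b\<close> by simp
    ultimately show "\<exists>y. (G has_real_derivative y) (at t) \<and> 0 \<le> y" by blast
  qed
  then show ?thesis
    using below by (simp add: G_def mult_le_0_iff)
qed

lemma DERIV_zero_if_constant_right:
  fixes g :: "real \<Rightarrow> real"
  assumes "(g has_real_derivative D) (at s)" "\<delta> > 0" "\<And>t. t \<in> {s..s + \<delta>} \<Longrightarrow> g t = g s"
  shows "D = 0"
proof (rule ccontr)
  assume "D \<noteq> 0"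
  then consider "D > 0" | "D < 0" by linarith
  then obtain e where "e > 0" and e: "\<And>t. 0 < t \<Longrightarrow> t < e \<Longrightarrow> g (s + t) \<noteq> g s"
    by cases (metis DERIV_pos_inc_right DERIV_neg_dec_right assms(1) less_irrefl)+
  define t where "t = min e \<delta> / 2"
  have "0 < t" "t < e" "t \<le> \<delta>"
    using assms(2) \<open>e > 0\<close> unfolding t_def by auto
  moreover have "g (s + t) = g s"
    using \<open>0 < t\<close> \<open>t \<le> \<delta>\<close> by (intro assms(3)) simp
  ultimately show False
    using e by blast
qed

lemma mono_if_deriv_nonneg:
  fixes g :: "real \<Rightarrow> real"
  assumes "\<And>x. g differentiable (at x)" "\<And>x. deriv g x \<ge> 0"
  shows "mono g"
  unfolding mono_def
  using assms DERIV_deriv_iff_real_differentiable DERIV_nonneg_imp_nondecreasing by metis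

lemma Delta1_diff_le_of_mono:
  assumes "mono \<phi>" "\<eta> \<le> \<xi>"
  shows "Delta1 \<phi> \<eta> - Delta1 \<phi> \<xi> \<le> 2 * (\<phi> \<xi> - \<phi> \<eta>)"
proof -
  have "\<phi> (\<eta> + 1) \<le> \<phi> (\<xi> + 1)" "\<phi> (\<eta> - 1) \<le> \<phi> (\<xi> - 1)"
    using assms(2) by (auto intro!: monoD[OF assms(1)])
  then show ?thesis
    unfolding Delta1_def by (simp add: algebra_simps)
qed

lemma integrable_kernel_mult_shift:
  fixes h \<psi> :: "real \<Rightarrow> real"
  assumes "integrable lborel h" "\<psi> \<in> borel_measurable borel" "\<And>x. \<bar>\<psi> x\<bar> \<le> B"
  shows "integrable lborel (\<lambda>y. h y * \<psi> (x - y))"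
proof (rule Bochner_Integration.integrable_bound)
  show "integrable lborel (\<lambda>y. B * h y)" using assms(1) by simp
  show "(\<lambda>y. h y * \<psi> (x - y)) \<in> borel_measurable lborel"
    using assms(1,2) by (auto intro!: borel_measurable_times measurable_compose[OF _ assms(2)])
  show "AE y in lborel. norm (h y * \<psi> (x - y)) \<le> norm (B * h y)"
  proof (rule AE_I2)
    fix y
    have "\<bar>h y\<bar> * \<bar>\<psi> (x - y)\<bar> \<le> \<bar>h y\<bar> * \<bar>B\<bar>"
      using assms(3) by (meson abs_ge_self abs_ge_zero mult_left_mono order_trans)
    then show "norm (h y * \<psi> (x - y)) \<le> norm (B * h y)"
      by (simp add: abs_mult mult.commute)
  qed
qed

lemma conv_mem_Icc:
  assumes h_nonneg: "\<And>x. h x \<ge> 0" and "integrable lborel h" and h_unit: "(LINT x|lborel. h x) = 1"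
    and "\<phi> \<in> borel_measurable borel" and range: "\<And>x. \<phi> x \<in> {0..K}"
  shows "conv h \<phi> x \<in> {0..K}"
  unfolding atLeastAtMost_iff
proof
  show "0 \<le> conv h \<phi> x"
    unfolding conv_def using h_nonneg range by (intro integral_nonneg_AE) auto
  have "\<bar>\<phi> x\<bar> \<le> K" for x
    using range[of x] by auto
  then have "integrable lborel (\<lambda>y. h y * \<phi> (x - y))"
    using assms by (intro integrable_kernel_mult_shift)
  then have "conv h \<phi> x \<le> (LINT y|lborel. K * h y)"
    unfolding conv_def using range h_nonneg \<open>integrable lborel h\<close>
    by (intro integral_mono) (auto simp: mult.commute[of K] intro!: mult_left_mono)
  also have "\<dots> = K"
    using h_unit by simp
  finally show "conv h \<phi> x \<le> K" .
qed

lemma mono_conv: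
  assumes "\<And>x. h x \<ge> 0" and "integrable lborel h" and "mono \<phi>" and "\<And>x. \<bar>\<phi> x\<bar> \<le> B"
  shows "mono (conv h \<phi>)"
proof
  fix x y :: real assume "x \<le> y"
  have "integrable lborel (\<lambda>t. h t * \<phi> (z - t))" for z
    using assms by (intro integrable_kernel_mult_shift borel_measurable_mono)
  then show "conv h \<phi> x \<le> conv h \<phi> y"
    unfolding conv_def using assms \<open>x \<le> y\<close>
    by (intro integral_mono) (auto intro!: mult_left_mono monoD[OF \<open>mono \<phi>\<close>])
qed

text \<open>\<open>w\<close> stands for the delayed nonlocal argument \<open>\<xi> \<mapsto> (h * \<phi>)(\<xi> - c \<tau>)\<close>; only its range
  and monotonicity matter.\<close>
locale monotone_wave_profile =
  fixes d c K :: real and f :: "real \<Rightarrow> real \<Rightarrow> real" and \<phi> w :: "real \<Rightarrow> real"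
  assumes d_pos: "d > 0" and c_pos: "c > 0"
    and phi_differentiable: "\<And>x. \<phi> differentiable (at x)"
    and deriv_phi_nonneg: "\<And>x. deriv \<phi> x \<ge> 0"
    and phi_range: "\<And>x. \<phi> x \<in> {0..K}"
    and w_range: "\<And>x. w x \<in> {0..K}"
    and w_mono: "mono w"
    and f_mono_right: "\<And>u a b. u \<in> {0..K} \<Longrightarrow> 0 \<le> a \<Longrightarrow> a \<le> b \<Longrightarrow> b \<le> K \<Longrightarrow> f u a \<le> f u b"
    and f_differentiable_left:
      "\<And>u v. u \<in> {0..K} \<Longrightarrow> v \<in> {0..K} \<Longrightarrow> (\<lambda>x. f x v) differentiable (at u within {0..K})"
    and wave_equation: "\<And>x. c * deriv \<phi> x = d * Delta1 \<phi> x + f (\<phi> x) (w x)"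
begin

lemma phi_has_deriv: "(\<phi> has_real_derivative deriv \<phi> x) (at x)"
  using phi_differentiable DERIV_deriv_iff_real_differentiable by blast

lemma phi_mono: "mono \<phi>"
  using phi_differentiable deriv_phi_nonneg by (rule mono_if_deriv_nonneg)

lemma continuous_phi: "continuous_on UNIV \<phi>"
  using phi_has_deriv DERIV_continuous continuous_at_imp_continuous_on by blast

lemma deriv_bound_left_of_critical_point:
  assumes crit: "deriv \<phi> \<xi>0 = 0"
  obtains M e where "e > 0" "\<And>\<eta>. \<eta> \<in> {\<xi>0 - e..\<xi>0} \<Longrightarrow> c * deriv \<phi> \<eta> \<le> M * (\<phi> \<xi>0 - \<phi> \<eta>)"
proof -
  define u0 w0 where "u0 = \<phi> \<xi>0" and "w0 = w \<xi>0"
  obtain L r where "r > 0"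
    and Lipschitz: "\<And>u. u \<in> {0..K} \<Longrightarrow> \<bar>u - u0\<bar> < r \<Longrightarrow> \<bar>f u w0 - f u0 w0\<bar> \<le> L * \<bar>u - u0\<bar>"
    using local_Lipschitz_if_differentiable_within[OF f_differentiable_left[OF phi_range w_range]]
    unfolding u0_def w0_def by blast
  have "isCont \<phi> \<xi>0"
    using phi_has_deriv by (rule DERIV_isCont)
  then obtain \<delta> where "\<delta> > 0" and close: "\<And>\<eta>. dist \<eta> \<xi>0 < \<delta> \<Longrightarrow> dist (\<phi> \<eta>) u0 < r"
    unfolding continuous_at_eps_delta u0_def using \<open>r > 0\<close> by blast
  define e where "e = \<delta> / 2"
  have "c * deriv \<phi> \<eta> \<le> (2 * d + L) * (u0 - \<phi> \<eta>)" if \<eta>: "\<eta> \<in> {\<xi>0 - e..\<xi>0}" for \<eta>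
  proof -
    have at_crit: "0 = d * Delta1 \<phi> \<xi>0 + f u0 w0"
      using wave_equation[of \<xi>0] crit unfolding u0_def w0_def by simp
    have "\<phi> \<eta> \<le> u0"
      using \<eta> unfolding u0_def by (auto intro!: monoD[OF phi_mono])
    have "Delta1 \<phi> \<eta> - Delta1 \<phi> \<xi>0 \<le> 2 * (u0 - \<phi> \<eta>)"
      using Delta1_diff_le_of_mono[OF phi_mono] \<eta> unfolding u0_def by simp
    then have "d * Delta1 \<phi> \<eta> - d * Delta1 \<phi> \<xi>0 \<le> 2 * d * (u0 - \<phi> \<eta>)"
      using mult_left_mono[of _ _ d] d_pos by (fastforce simp: algebra_simps)
    moreover have "f (\<phi> \<eta>) (w \<eta>) \<le> f (\<phi> \<eta>) w0"
      using f_mono_right phi_range w_range w_mono \<eta> unfolding w0_def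
      by (meson atLeastAtMost_iff monoD)
    moreover have "f (\<phi> \<eta>) w0 - f u0 w0 \<le> L * (u0 - \<phi> \<eta>)"
    proof -
      have "\<bar>\<phi> \<eta> - u0\<bar> < r"
        using close[of \<eta>] \<eta> \<open>\<delta> > 0\<close> unfolding e_def dist_real_def by auto
      then have "\<bar>f (\<phi> \<eta>) w0 - f u0 w0\<bar> \<le> L * \<bar>\<phi> \<eta> - u0\<bar>"
        by (rule Lipschitz[OF phi_range])
      moreover have "\<bar>\<phi> \<eta> - u0\<bar> = u0 - \<phi> \<eta>"
        using \<open>\<phi> \<eta> \<le> u0\<close> by arith
      ultimately show ?thesis by simp
    qed
    moreover have "(2 * d + L) * (u0 - \<phi> \<eta>) = 2 * d * (u0 - \<phi> \<eta>) + L * (u0 - \<phi> \<eta>)"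
      by (simp add: algebra_simps)
    ultimately show ?thesis
      using wave_equation[of \<eta>] at_crit by linarith
  qed
  moreover have "e > 0"
    using \<open>\<delta> > 0\<close> unfolding e_def by simp
  ultimately show ?thesis
    using that unfolding u0_def by blast
qed

lemma constant_left_near_critical_point:
  assumes "deriv \<phi> \<xi>0 = 0"
  obtains e where "e > 0" "\<And>\<eta>. \<eta> \<in> {\<xi>0 - e..\<xi>0} \<Longrightarrow> \<phi> \<eta> = \<phi> \<xi>0"
proof -
  obtain M e where "e > 0" and bound: "\<And>\<eta>. \<eta> \<in> {\<xi>0 - e..\<xi>0} \<Longrightarrow> c * deriv \<phi> \<eta> \<le> M * (\<phi> \<xi>0 - \<phi> \<eta>)"
    using deriv_bound_left_of_critical_point assms by blast
  have "\<phi> \<eta> = \<phi> \<xi>0" if "\<eta> \<in> {\<xi>0 - e..\<xi>0}" for \<eta>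
  proof (rule backward_Gronwall_eq[where g = \<phi> and g' = "deriv \<phi>" and L = "M / c"])
    show "\<eta> \<le> \<xi>0" "\<phi> \<eta> \<le> \<phi> \<xi>0"
      using that by (auto intro: monoD[OF phi_mono])
    show "(\<phi> has_real_derivative deriv \<phi> t) (at t)" for t
      by (rule phi_has_deriv)
    show "deriv \<phi> t \<le> M / c * (\<phi> \<xi>0 - \<phi> t)" if "t \<in> {\<eta>..\<xi>0}" for t
      using bound[of t] that \<open>\<eta> \<in> {\<xi>0 - e..\<xi>0}\<close> c_pos by (simp add: field_simps)
  qed
  with \<open>e > 0\<close> that show ?thesis by blast
qed

lemma critical_at_left_end_of_plateau:
  assumes crit: "deriv \<phi> \<xi>0 = 0" and "s \<le> \<xi>0" and "\<phi> s = \<phi> \<xi>0"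
  shows "deriv \<phi> s = 0"
proof (cases "s = \<xi>0")
  case False
  have plateau: "\<phi> t = \<phi> s" if "t \<in> {s..\<xi>0}" for t
    using monoD[OF phi_mono, of s t] monoD[OF phi_mono, of t \<xi>0] that assms(3) by auto
  have "\<xi>0 - s > 0"
    using False \<open>s \<le> \<xi>0\<close> by simp
  then show ?thesis
    by (rule DERIV_zero_if_constant_right[OF phi_has_deriv]) (intro plateau, simp)
qed (use crit in simp)

lemma constant_left_of_critical_point:
  assumes crit: "deriv \<phi> \<xi>0 = 0" and "\<eta> \<le> \<xi>0"
  shows "\<phi> \<eta> = \<phi> \<xi>0"
proof -
  define T where "T = {t. t \<le> \<xi>0 \<and> \<phi> t = \<phi> \<xi>0}"
  have "\<xi>0 \<in> T" unfolding T_def by simp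
  have "\<not> bdd_below T"
  proof
    assume "bdd_below T"
    define s where "s = Inf T"
    have "closed T"
      unfolding T_def using continuous_phi
      by (intro closed_Collect_conj closed_Collect_le closed_Collect_eq continuous_intros)
        (auto simp: continuous_on_eq_continuous_at)
    then have "s \<in> T"
      unfolding s_def using \<open>\<xi>0 \<in> T\<close> \<open>bdd_below T\<close> closed_contains_Inf by blast
    then have "s \<le> \<xi>0" "\<phi> s = \<phi> \<xi>0"
      unfolding T_def by auto
    then have crit_s: "deriv \<phi> s = 0"
      using critical_at_left_end_of_plateau[OF crit] by blast
    obtain e where "e > 0" and left_const: "\<And>\<eta>. \<eta> \<in> {s - e..s} \<Longrightarrow> \<phi> \<eta> = \<phi> s"
      using constant_left_near_critical_point[OF crit_s] by blast
    have "\<phi> (s - e) = \<phi> s"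
      using \<open>e > 0\<close> by (intro left_const) simp
    then have "s - e \<in> T"
      using \<open>s \<in> T\<close> \<open>e > 0\<close> unfolding T_def by simp
    then have "s \<le> s - e"
      unfolding s_def using \<open>bdd_below T\<close> by (rule cInf_lower)
    with \<open>e > 0\<close> show False by simp
  qed
  then obtain t where "t \<in> T" "t < \<eta>"
    unfolding bdd_below_def by (meson not_le)
  then show ?thesis
    using monoD[OF phi_mono, of t \<eta>] monoD[OF phi_mono, of \<eta> \<xi>0] \<open>\<eta> \<le> \<xi>0\<close> unfolding T_def by auto
qed

lemma critical_value_eq_0:
  assumes "(\<phi> \<longlongrightarrow> 0) at_bot" and "deriv \<phi> \<xi>0 = 0"
  shows "\<phi> \<xi>0 = 0"
proof -
  have "eventually (\<lambda>x. \<phi> x = \<phi> \<xi>0) at_bot"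
    unfolding eventually_at_bot_linorder using constant_left_of_critical_point assms(2) by blast
  then have "(\<phi> \<longlongrightarrow> \<phi> \<xi>0) at_bot"
    by (rule tendsto_eventually)
  with assms(1) show ?thesis
    using tendsto_unique[OF trivial_limit_at_bot_linorder] by blast
qed

lemma vanishing_extends_right:
  assumes "f 0 0 = 0" and zero: "\<And>\<eta>. \<eta> < x0 \<Longrightarrow> \<phi> \<eta> = 0" and "\<eta> < x0 + 1"
  shows "\<phi> \<eta> = 0"
proof -
  define x where "x = \<eta> - 1"
  have "x < x0" using assms(3) unfolding x_def by simp
  have "deriv \<phi> x = 0"
    by (rule DERIV_local_const[OF phi_has_deriv, of "x0 - x"])
      (use \<open>x < x0\<close> zero in \<open>auto simp: abs_less_iff\<close>)
  then have "d * \<phi> \<eta> + f 0 (w x) = 0"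
    using wave_equation[of x] zero[of x] zero[of "x - 1"] \<open>x < x0\<close>
    unfolding Delta1_def x_def by simp
  moreover have "f 0 0 \<le> f 0 (w x)"
    using f_mono_right[of 0 0 "w x"] w_range[of x] by auto
  ultimately have "d * \<phi> \<eta> \<le> 0"
    using assms(1) by linarith
  then show ?thesis
    using d_pos phi_range[of \<eta>] by (simp add: mult_le_0_iff)
qed

lemma vanishes_if_critical_point:
  assumes "f 0 0 = 0" and "(\<phi> \<longlongrightarrow> 0) at_bot" and crit: "deriv \<phi> \<xi>0 = 0"
  shows "\<phi> x = 0"
proof -
  have vanish: "\<forall>\<eta>. \<eta> < \<xi>0 + real n \<longrightarrow> \<phi> \<eta> = 0" for n
  proof (induction n)
    case 0
    then show ?case
      using constant_left_of_critical_point critical_value_eq_0 assms(2) crit by force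
  next
    case (Suc n)
    then show ?case
      using vanishing_extends_right[OF assms(1), of "\<xi>0 + real n"] by (auto simp: add.assoc)
  qed
  obtain n :: nat where "x - \<xi>0 < real n"
    using reals_Archimedean2 by blast
  then show ?thesis
    using vanish[of n] by auto
qed

end

lemma monotone_wave_profile_if_tw_solution:
  assumes f1_deriv: "\<And>u v. u \<in> {0..K} \<Longrightarrow> v \<in> {0..K} \<Longrightarrow>
        ((\<lambda>x. f x v) has_real_derivative f1 u v) (at u within {0..K})"
    and f2_deriv: "\<And>u v. u \<in> {0..K} \<Longrightarrow> v \<in> {0..K} \<Longrightarrow>
        ((\<lambda>y. f u y) has_real_derivative f2 u v) (at v within {0..K})"
    and f2_nonneg: "\<And>u v. u \<in> {0..K} \<Longrightarrow> v \<in> {0..K} \<Longrightarrow> f2 u v \<ge> 0"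
    and h_nonneg: "\<And>x. h x \<ge> 0" and h_int: "integrable lborel h" and h_unit: "(LINT x|lborel. h x) = 1"
    and d: "d > 0" and sol: "tw_solution d \<tau> K f h c \<phi>" and mono: "\<And>\<xi>. deriv \<phi> \<xi> \<ge> 0"
  shows "monotone_wave_profile d c K f \<phi> (\<lambda>x. conv h \<phi> (x - c * \<tau>))"
proof -
  from sol have "c > 0" and differentiable: "\<And>x. \<phi> differentiable (at x)"
    and equation: "\<And>x. - c * deriv \<phi> x + d * Delta1 \<phi> x + f (\<phi> x) (conv h \<phi> (x - c * \<tau>)) = 0"
    and range: "\<And>x. \<phi> x \<in> {0..K}"
    unfolding tw_solution_def by auto
  have "mono \<phi>"
    using differentiable mono by (rule mono_if_deriv_nonneg)
  have bounded: "\<bar>\<phi> x\<bar> \<le> K" for x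
    using range[of x] by auto
  show ?thesis
  proof
    show "(\<lambda>x. f x v) differentiable (at u within {0..K})" if "u \<in> {0..K}" "v \<in> {0..K}" for u v
      using f1_deriv[OF that] real_differentiable_def by blast
    show "f u a \<le> f u b" if "u \<in> {0..K}" "0 \<le> a" "a \<le> b" "b \<le> K" for u a b
      using nondecreasing_if_has_real_derivative_within_Icc[OF f2_deriv f2_nonneg] that by blast
    show "mono (\<lambda>x. conv h \<phi> (x - c * \<tau>))"
      by (intro monoI monoD[OF mono_conv[OF h_nonneg h_int \<open>mono \<phi>\<close> bounded]]) simp
    show "c * deriv \<phi> x = d * Delta1 \<phi> x + f (\<phi> x) (conv h \<phi> (x - c * \<tau>))" for x
      using equation[of x] by linarith
  qed (use d \<open>c > 0\<close> differentiable mono range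
         conv_mem_Icc[OF h_nonneg h_int h_unit borel_measurable_mono[OF \<open>mono \<phi>\<close>] range] in auto)
qed

theorem lemma3p2:
  fixes d \<tau> K c :: real
    and f :: "real \<Rightarrow> real \<Rightarrow> real"
    and f1 f2 :: "real \<Rightarrow> real \<Rightarrow> real"
    and h \<phi> :: "real \<Rightarrow> real"
  assumes d: "d > 0" and tau: "\<tau> \<ge> 0" and K: "K > 0"
    and f1_deriv: "\<And>u v. u \<in> {0..K} \<Longrightarrow> v \<in> {0..K} \<Longrightarrow>
        ((\<lambda>x. f x v) has_real_derivative f1 u v) (at u within {0..K})"
    and f2_deriv: "\<And>u v. u \<in> {0..K} \<Longrightarrow> v \<in> {0..K} \<Longrightarrow>
        ((\<lambda>y. f u y) has_real_derivative f2 u v) (at v within {0..K})"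
    and F1_cont: "continuous_on ({0..K} \<times> {0..K}) (\<lambda>(u, v). f u v)"
    and F1_zero: "f 0 0 = 0" "f K K = 0"
    and F1_pos: "\<And>u. 0 < u \<Longrightarrow> u < K \<Longrightarrow> f u u > 0"
    and F1_mono: "\<And>u v. u \<in> {0..K} \<Longrightarrow> v \<in> {0..K} \<Longrightarrow> f2 u v \<ge> 0"
    and H1_nonneg: "\<And>x. h x \<ge> 0"
    and H1_even: "\<And>x. h (- x) = h x"
    and H1_int: "integrable lborel h"
    and H1_one: "(LINT x|lborel. h x) = 1"
    and sol: "tw_solution d \<tau> K f h c \<phi>"
    and mono: "\<And>\<xi>. deriv \<phi> \<xi> \<ge> 0"
  shows "\<forall>\<xi>. deriv \<phi> \<xi> > 0"
proof (rule ccontr)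
  interpret monotone_wave_profile d c K f \<phi> "\<lambda>x. conv h \<phi> (x - c * \<tau>)"
    using monotone_wave_profile_if_tw_solution[OF f1_deriv f2_deriv F1_mono H1_nonneg H1_int H1_one d sol mono] .
  have lim_bot: "(\<phi> \<longlongrightarrow> 0) at_bot" and lim_top: "(\<phi> \<longlongrightarrow> K) at_top"
    using sol unfolding tw_solution_def by auto
  assume "\<not> (\<forall>\<xi>. deriv \<phi> \<xi> > 0)"
  then obtain \<xi>0 where "\<not> deriv \<phi> \<xi>0 > 0"
    by blast
  then have "deriv \<phi> \<xi>0 = 0"
    using mono[of \<xi>0] by linarith
  then have "\<phi> = (\<lambda>_. 0)"
    using vanishes_if_critical_point[OF F1_zero(1) lim_bot] by blast
  then have "(\<phi> \<longlongrightarrow> 0) at_top"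
    by simp
  with lim_top have "K = 0"
    by (rule tendsto_unique[OF trivial_limit_at_top_linorder])
  with K show False by simp
qed

end
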